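(* Let $d\ge2$, let $U_0$ be a non-empty bounded Borel subset of $\mathbb{R}^d$, $U_1=\mathbb{R}^d\setminus U_0$. For all $x,y\in\mathbb{R}^d$ and $\ell\in\mathbb{Z}$, $$|\widehat\sigma_\ell(x+y)-\widehat\sigma_\ell(x)|\le 2^\ell|y|_1,\qquad |\widetilde\sigma_\ell(x+y)-\widetilde\sigma_\ell(x)|\le 2^{\ell-2}|y|_1.$$ Moreover, for integers $\ell'>\ell$ and $x\in\mathbb{R}^d$, $$\Big|\widehat\sigma_\ell(x)-\frac{1}{|B(x,2^{-\ell})|}\int_{B(x,2^{-\ell})}\widehat\sigma_{\ell'}(y)\,dy\Big|\le c_0\,2^{\ell-\ell'},\qquad c_0=d\,2^{d-1}.$$
   Context: $|\cdot|_1$ is the $\ell^1$-norm; $B(x,r)$ the closed sup-norm ball; $|\cdot|$ Lebesgue measure. $\widehat\sigma_\ell(x)=|B(x,2^{-\ell})\cap U_1|/|B(x,2^{-\ell})|$ and $\widetilde\sigma_\ell(x)=|B(x,4\cdot2^{-\ell})\cap U_1|/|B(x,4\cdot2^{-\ell})|$. *)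

theory Defs
  imports "HOL-Analysis.Analysis"
begin

text \<open>Closed sup-norm ball in R^d (vectors indexed by a finite type 'n, d = CARD('n)).\<close>
definition supball :: "real ^ 'n \<Rightarrow> real \<Rightarrow> (real ^ 'n) set" where
  "supball x r = {y. \<forall>i. \<bar>y $ i - x $ i\<bar> \<le> r}"

definition l1norm :: "real ^ 'n \<Rightarrow> real" where
  "l1norm y = (\<Sum>i\<in>UNIV. \<bar>y $ i\<bar>)"

definition density_U1 :: "(real ^ 'n) set \<Rightarrow> real \<Rightarrow> real ^ 'n \<Rightarrow> real" where
  "density_U1 U0 r x =
     measure lebesgue (supball x r \<inter> (UNIV - U0)) / measure lebesgue (supball x r)"

definition sigma_hat :: "(real ^ 'n) set \<Rightarrow> int \<Rightarrow> real ^ 'n \<Rightarrow> real" where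
  "sigma_hat U0 l x = density_U1 U0 (2 powr (- real_of_int l)) x"

definition sigma_tilde :: "(real ^ 'n) set \<Rightarrow> int \<Rightarrow> real ^ 'n \<Rightarrow> real" where
  "sigma_tilde U0 l x = density_U1 U0 (4 * 2 powr (- real_of_int l)) x"

end

theory Submission
  imports Defs
begin

text \<open>
  Both estimates are statements about the density of an arbitrary Borel set A (here
  the complement of U0) in sup-norm cubes.

  Translating a cube of side 2r by y changes it only inside d slabs of volumes
  |y_i| (2r)^(d-1), so its density changes by at most |y|_1 / (2r).

  For the averaging estimate, Tonelli's theorem turns the integral over B(x,r) of the
  density at the smaller scale s into (2s)^(-d) times the integral over z in A of
  |B(x,r) \<inter> B(z,s)|, which is squeezed between |B(x,r-s) \<inter> A| and |B(x,r+s) \<inter> A|.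
  Each differs from |B(x,r) \<inter> A| by at most the volume of a shell of width s, which is
  at most d 2^(d-1) (s/r) (2r)^d.
\<close>

definition local_density :: "(real ^ 'n) set \<Rightarrow> real \<Rightarrow> real ^ 'n \<Rightarrow> real" where
  "local_density A r x = measure lborel (supball x r \<inter> A) / measure lborel (supball x r)"

lemma supball_eq_cbox: "supball x r = cbox (\<chi> i. x $ i - r) (\<chi> i. x $ i + r)"
  unfolding supball_def by (auto simp: mem_box_cart abs_le_iff; smt (verit))

lemma supball_in_borel [measurable]: "supball x r \<in> sets borel"
  by (simp add: supball_eq_cbox)

lemma fmeasurable_lborel_cbox [simp]: "cbox a b \<in> fmeasurable lborel"
  using emeasure_lborel_cbox_finite by (simp add: fmeasurable_def top.not_eq_extremum)

lemma fmeasurable_supball [simp]: "supball x r \<in> fmeasurable lborel"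
  by (simp add: supball_eq_cbox)

lemma measure_supball:
  fixes x :: "real ^ 'n"
  assumes "0 \<le> r"
  shows "measure lborel (supball x r) = (2 * r) ^ CARD('n)"
proof -
  have "cbox (\<chi> i. x $ i - r) (\<chi> i. x $ i + r) \<noteq> {}"
    using assms by (auto simp: interval_eq_empty_cart)
  then show ?thesis
    unfolding supball_eq_cbox by (simp add: content_cbox_cart)
qed

lemma measure_lebesgue_supball: "measure lebesgue (supball x r) = measure lborel (supball x r)"
  by (simp add: measure_completion)

lemma supball_mono: "r1 \<le> r2 \<Longrightarrow> supball x r1 \<subseteq> supball x r2"
  unfolding supball_def using order_trans by blast

lemma diff_mem_supball_0: "z - y \<in> supball 0 s \<longleftrightarrow> z \<in> supball y s"
  by (simp add: supball_def)

lemma mem_supball_commute: "y \<in> supball x r \<longleftrightarrow> x \<in> supball y r"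
  unfolding supball_def by (auto simp: abs_minus_commute)

lemma supball_subset_supball:
  assumes "y \<in> supball x (r - s)"
  shows "supball y s \<subseteq> supball x r"
proof
  fix z assume z: "z \<in> supball y s"
  have "\<bar>z $ i - x $ i\<bar> \<le> r" for i
  proof -
    have "\<bar>z $ i - y $ i\<bar> \<le> s" "\<bar>y $ i - x $ i\<bar> \<le> r - s"
      using z assms by (simp_all add: supball_def)
    then show ?thesis by linarith
  qed
  then show "z \<in> supball x r"
    by (simp add: supball_def)
qed

lemma supball_disjoint:
  fixes x y :: "real ^ 'n"
  assumes "y \<notin> supball x (r + s)"
  shows "supball x r \<inter> supball y s = {}"
proof -
  obtain i where i: "r + s < \<bar>y $ i - x $ i\<bar>"
    using assms by (auto simp: supball_def not_le)
  have "\<not> (\<bar>z $ i - x $ i\<bar> \<le> r \<and> \<bar>z $ i - y $ i\<bar> \<le> s)" for z :: "real ^ 'n"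
    using i by linarith
  then show ?thesis
    by (auto simp: supball_def)
qed

lemma emeasure_supball_inter:
  "A \<in> sets borel \<Longrightarrow> emeasure lborel (supball x r \<inter> A) = measure lborel (supball x r \<inter> A)"
  by (simp add: emeasure_eq_measure2 fmeasurable_Int_fmeasurable)

lemma l1norm_uminus: "l1norm (- y) = l1norm y"
  by (simp add: l1norm_def)

lemma l1norm_nonneg: "0 \<le> l1norm y"
  by (simp add: l1norm_def sum_nonneg)

lemma l1norm_le_card_norm: "l1norm (y :: real ^ 'n) \<le> CARD('n) * norm y"
  unfolding l1norm_def using sum_bounded_above[of UNIV "\<lambda>i. \<bar>y $ i\<bar>" "norm y"]
  by (simp add: component_le_norm_cart)

lemma density_U1_eq_local_density:
  fixes U0 :: "(real ^ 'n) set"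
  assumes "U0 \<in> sets borel"
  shows "density_U1 U0 r = local_density (UNIV - U0) r"
proof
  fix x :: "real ^ 'n"
  have "supball x r \<inter> (UNIV - U0) \<in> sets lborel"
    using assms by simp
  then show "density_U1 U0 r x = local_density (UNIV - U0) r x"
    by (simp add: density_U1_def local_density_def measure_completion)
qed

lemma measure_inter_diff_le_measure_diff:
  assumes "B \<in> fmeasurable M" "C \<in> fmeasurable M" "A \<in> sets M"
  shows "measure M (B \<inter> A) - measure M (C \<inter> A) \<le> measure M (B - C)"
proof -
  have "measure M (B \<inter> A) - measure M (C \<inter> A) \<le> measure M (B \<inter> A - C \<inter> A)"
    using assms by (simp add: measure_diff_le_measure_setdiff fmeasurable_Int_fmeasurable)
  also have "\<dots> \<le> measure M (B - C)"
    by (rule measure_mono_fmeasurable) (use assms in \<open>auto simp: fmeasurable_Diff fmeasurableD\<close>)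
  finally show ?thesis .
qed

lemma supball_translate_diff_covered:
  fixes x y :: "real ^ 'n"
  obtains a b :: "'n \<Rightarrow> real ^ 'n"
  where "\<And>i. b i $ i - a i $ i = \<bar>y $ i\<bar>"
    and "\<And>i j. j \<noteq> i \<Longrightarrow> b i $ j - a i $ j = 2 * r"
    and "supball (x + y) r - supball x r \<subseteq> (\<Union>i. cbox (a i) (b i))"
proof
  define a where "a i = (\<chi> j. if j \<noteq> i then x $ j + y $ j - r
      else if 0 \<le> y $ i then x $ i + r else x $ i + y $ i - r)" for i
  define b where "b i = (\<chi> j. if j \<noteq> i then x $ j + y $ j + r
      else if 0 \<le> y $ i then x $ i + y $ i + r else x $ i - r)" for i
  show "b i $ i - a i $ i = \<bar>y $ i\<bar>" for i
    by (simp add: a_def b_def)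
  show "b i $ j - a i $ j = 2 * r" if "j \<noteq> i" for i j
    using that by (simp add: a_def b_def)
  show "supball (x + y) r - supball x r \<subseteq> (\<Union>i. cbox (a i) (b i))"
  proof
    fix z assume z: "z \<in> supball (x + y) r - supball x r"
    then obtain i where i: "r < \<bar>z $ i - x $ i\<bar>"
      by (auto simp: supball_def not_le)
    have zb: "\<bar>z $ j - x $ j - y $ j\<bar> \<le> r" for j
      using z by (simp add: supball_def diff_diff_eq)
    have "a i $ j \<le> z $ j \<and> z $ j \<le> b i $ j" for j
    proof (cases "j = i")
      case True
      then show ?thesis
        using i zb[of i] by (simp add: a_def b_def) linarith
    next
      case False
      then show ?thesis
        using zb[of j] by (simp add: a_def b_def) linarith
    qed
    then have "z \<in> cbox (a i) (b i)"
      by (simp add: mem_box_cart)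
    then show "z \<in> (\<Union>i. cbox (a i) (b i))" by blast
  qed
qed

lemma measure_supball_translate_diff_le:
  fixes x y :: "real ^ 'n"
  assumes "0 \<le> r"
  shows "measure lborel (supball (x + y) r - supball x r) \<le> l1norm y * (2 * r) ^ (CARD('n) - 1)"
proof -
  obtain a b :: "'n \<Rightarrow> real ^ 'n"
    where width_i: "\<And>i. b i $ i - a i $ i = \<bar>y $ i\<bar>"
      and width_j: "\<And>i j. j \<noteq> i \<Longrightarrow> b i $ j - a i $ j = 2 * r"
      and cover: "supball (x + y) r - supball x r \<subseteq> (\<Union>i. cbox (a i) (b i))"
    by (rule supball_translate_diff_covered[where x = x and y = y and r = r]) blast
  have box: "measure lborel (cbox (a i) (b i)) = \<bar>y $ i\<bar> * (2 * r) ^ (CARD('n) - 1)" for i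
  proof -
    have "a i $ j \<le> b i $ j" for j
      using width_i[of i] width_j[of j i] assms by (cases "j = i") simp_all
    then have "measure lborel (cbox (a i) (b i)) = (\<Prod>j\<in>UNIV. b i $ j - a i $ j)"
      by (simp add: content_cbox_cart interval_eq_empty_cart not_less)
    also have "\<dots> = (b i $ i - a i $ i) * (\<Prod>j\<in>UNIV - {i}. b i $ j - a i $ j)"
      by (simp add: prod.remove)
    also have "(\<Prod>j\<in>UNIV - {i}. b i $ j - a i $ j) = (\<Prod>j\<in>UNIV - {i}. 2 * r)"
      by (rule prod.cong) (simp_all add: width_j)
    also have "\<dots> = (2 * r) ^ (CARD('n) - 1)"
      by (simp add: card_Diff_singleton)
    finally show ?thesis
      by (simp add: width_i)
  qed
  have "measure lborel (supball (x + y) r - supball x r) \<le> measure lborel (\<Union>i. cbox (a i) (b i))"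
    by (rule measure_mono_fmeasurable[OF cover]) (simp_all add: fmeasurable.finite_UN)
  also have "\<dots> \<le> (\<Sum>i\<in>UNIV. measure lborel (cbox (a i) (b i)))"
    by (rule measure_UNION_le) simp_all
  also have "\<dots> = l1norm y * (2 * r) ^ (CARD('n) - 1)"
    by (simp add: box l1norm_def sum_distrib_right)
  finally show ?thesis .
qed

lemma local_density_translate_le:
  fixes x y :: "real ^ 'n"
  assumes "0 < r" and "A \<in> sets borel"
  shows "\<bar>local_density A r (x + y) - local_density A r x\<bar> \<le> l1norm y / (2 * r)"
proof -
  define K where "K = (2 * r) ^ (CARD('n) - 1)"
  have K: "0 < K" using assms(1) by (simp add: K_def)
  have "(2 * r) ^ CARD('n) = 2 * r * K"
    unfolding K_def by (subst (1) Suc_pred'[OF zero_less_card_finite]) (rule power_Suc)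
  then have volume: "measure lborel (supball z r) = 2 * r * K" for z :: "real ^ 'n"
    using assms(1) by (simp add: measure_supball)
  have gain: "measure lborel (supball (z + w) r \<inter> A) - measure lborel (supball z r \<inter> A) \<le> l1norm w * K"
    for z w :: "real ^ 'n"
    using measure_inter_diff_le_measure_diff[of "supball (z + w) r" lborel "supball z r" A]
      measure_supball_translate_diff_le[of r z w] assms
    by (simp add: K_def)
  have "\<bar>measure lborel (supball (x + y) r \<inter> A) - measure lborel (supball x r \<inter> A)\<bar> \<le> l1norm y * K"
    using gain[of x y] gain[of "x + y" "- y"] by (simp add: l1norm_uminus)
  then show ?thesis
    using assms(1) K
    by (simp add: local_density_def volume abs_divide flip: diff_divide_distrib)
       (simp add: divide_le_eq field_simps)
qed

lemma continuous_on_local_density: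
  fixes A :: "(real ^ 'n) set"
  assumes "0 < r" and "A \<in> sets borel"
  shows "continuous_on UNIV (local_density A r)"
proof (rule lipschitz_on_continuous_on)
  show "(CARD('n) / (2 * r))-lipschitz_on UNIV (local_density A r)"
  proof (rule lipschitz_onI)
    fix x y :: "real ^ 'n"
    have "dist (local_density A r x) (local_density A r y)
        = \<bar>local_density A r (y + (x - y)) - local_density A r y\<bar>"
      by (simp add: dist_real_def)
    also have "\<dots> \<le> l1norm (x - y) / (2 * r)"
      using local_density_translate_le[OF assms] .
    also have "\<dots> \<le> CARD('n) / (2 * r) * dist x y"
      using l1norm_le_card_norm[of "x - y"] assms(1)
      by (simp add: dist_norm divide_right_mono)
    finally show "dist (local_density A r x) (local_density A r y) \<le> CARD('n) / (2 * r) * dist x y" .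
  qed (use assms(1) in simp)
qed

lemma nn_integral_measure_supball_inter_swap:
  fixes x :: "real ^ 'n"
  assumes [measurable]: "A \<in> sets borel"
  shows "(\<integral>\<^sup>+y\<in>supball x r. emeasure lborel (supball y s \<inter> A) \<partial>lborel)
       = (\<integral>\<^sup>+z\<in>A. emeasure lborel (supball x r \<inter> supball z s) \<partial>lborel)"
proof -
  define S where "S = {p \<in> space (lborel \<Otimes>\<^sub>M lborel).
    fst p \<in> supball x r \<and> snd p \<in> A \<and> snd p - fst p \<in> supball 0 s}"
  have S: "S \<in> sets (lborel \<Otimes>\<^sub>M lborel)"
    unfolding S_def by measurable
  have row: "Pair y -` S = (if y \<in> supball x r then supball y s \<inter> A else {})" for y
    by (auto simp: S_def diff_mem_supball_0 space_pair_measure)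
  have column: "(\<lambda>y. (y, z)) -` S = (if z \<in> A then supball x r \<inter> supball z s else {})" for z
    using mem_supball_commute by (auto simp: S_def diff_mem_supball_0 space_pair_measure)
  have "(\<integral>\<^sup>+y\<in>supball x r. emeasure lborel (supball y s \<inter> A) \<partial>lborel)
      = (\<integral>\<^sup>+y. emeasure lborel (Pair y -` S) \<partial>lborel)"
    by (intro nn_integral_cong) (simp add: row split: split_indicator)
  also have "\<dots> = emeasure (lborel \<Otimes>\<^sub>M lborel) S"
    by (rule lborel.emeasure_pair_measure_alt[OF S, symmetric])
  also have "\<dots> = (\<integral>\<^sup>+z. emeasure lborel ((\<lambda>y. (y, z)) -` S) \<partial>lborel)"
    by (rule lborel_pair.emeasure_pair_measure_alt2[OF S])
  also have "\<dots> = (\<integral>\<^sup>+z\<in>A. emeasure lborel (supball x r \<inter> supball z s) \<partial>lborel)"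
    by (intro nn_integral_cong) (simp add: column split: split_indicator)
  finally show ?thesis .
qed

lemma nn_integral_measure_supball_inter_ge:
  fixes x :: "real ^ 'n"
  assumes "A \<in> sets borel" and "0 \<le> s"
  shows "ennreal ((2 * s) ^ CARD('n) * measure lborel (supball x (r - s) \<inter> A))
       \<le> (\<integral>\<^sup>+z\<in>A. emeasure lborel (supball x r \<inter> supball z s) \<partial>lborel)"
proof -
  have "ennreal ((2 * s) ^ CARD('n) * measure lborel (supball x (r - s) \<inter> A))
      = (\<integral>\<^sup>+z. ennreal ((2 * s) ^ CARD('n)) * indicator (supball x (r - s) \<inter> A) z \<partial>lborel)"
    using assms by (simp add: nn_integral_cmult_indicator emeasure_supball_inter ennreal_mult)
  also have "\<dots> \<le> (\<integral>\<^sup>+z\<in>A. emeasure lborel (supball x r \<inter> supball z s) \<partial>lborel)"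
  proof (intro nn_integral_mono)
    fix z
    show "ennreal ((2 * s) ^ CARD('n)) * indicator (supball x (r - s) \<inter> A) z
        \<le> emeasure lborel (supball x r \<inter> supball z s) * indicator A z"
    proof (cases "z \<in> supball x (r - s) \<inter> A")
      case True
      then have "supball x r \<inter> supball z s = supball z s"
        using supball_subset_supball by blast
      then show ?thesis
        using True assms(2) by (simp add: emeasure_eq_measure2 measure_supball)
    qed simp
  qed
  finally show ?thesis .
qed

lemma nn_integral_measure_supball_inter_le:
  fixes x :: "real ^ 'n"
  assumes "A \<in> sets borel" and "0 \<le> s"
  shows "(\<integral>\<^sup>+z\<in>A. emeasure lborel (supball x r \<inter> supball z s) \<partial>lborel)
       \<le> ennreal ((2 * s) ^ CARD('n) * measure lborel (supball x (r + s) \<inter> A))"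
proof -
  have "(\<integral>\<^sup>+z\<in>A. emeasure lborel (supball x r \<inter> supball z s) \<partial>lborel)
      \<le> (\<integral>\<^sup>+z. ennreal ((2 * s) ^ CARD('n)) * indicator (supball x (r + s) \<inter> A) z \<partial>lborel)"
  proof (intro nn_integral_mono)
    fix z
    show "emeasure lborel (supball x r \<inter> supball z s) * indicator A z
        \<le> ennreal ((2 * s) ^ CARD('n)) * indicator (supball x (r + s) \<inter> A) z"
    proof (cases "z \<in> supball x (r + s)")
      case True
      have "emeasure lborel (supball x r \<inter> supball z s) \<le> emeasure lborel (supball z s)"
        by (intro emeasure_mono) auto
      then show ?thesis
        using True assms(2) by (simp add: emeasure_eq_measure2 measure_supball indicator_def)
    qed (simp add: supball_disjoint)
  qed
  also have "\<dots> = ennreal ((2 * s) ^ CARD('n) * measure lborel (supball x (r + s) \<inter> A))"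
    using assms by (simp add: nn_integral_cmult_indicator emeasure_supball_inter ennreal_mult)
  finally show ?thesis .
qed

lemma integrable_local_density:
  assumes "0 < s" and "A \<in> sets borel"
  shows "local_density A s integrable_on supball x r"
proof -
  have "continuous_on (supball x r) (local_density A s)"
    using continuous_on_local_density[OF assms] by (rule continuous_on_subset) simp
  then show ?thesis
    unfolding supball_eq_cbox by (rule integrable_continuous)
qed

lemma integral_local_density_eq:
  fixes x :: "real ^ 'n"
  assumes A: "A \<in> sets borel" and s: "0 < s"
  shows "ennreal ((2 * s) ^ CARD('n) * integral (supball x r) (local_density A s))
       = (\<integral>\<^sup>+z\<in>A. emeasure lborel (supball x r \<inter> supball z s) \<partial>lborel)"
proof -
  define V where "V = (2 * s) ^ CARD('n)"
  define I where "I = integral (supball x r) (local_density A s)"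
  have V: "0 < V"
    using s by (simp add: V_def)
  have nonneg: "0 \<le> local_density A s y" for y
    by (simp add: local_density_def)
  have integrable: "local_density A s integrable_on supball x r"
    using s A by (rule integrable_local_density)
  then have I: "0 \<le> I"
    unfolding I_def using nonneg by (rule integral_nonneg)
  have [measurable]: "local_density A s \<in> borel_measurable borel"
    using continuous_on_local_density[OF s A] by (rule borel_measurable_continuous_onI)
  have pointwise: "ennreal V * ennreal (local_density A s y) = emeasure lborel (supball y s \<inter> A)" for y
  proof -
    have "V * local_density A s y = measure lborel (supball y s \<inter> A)"
      using V s by (simp add: local_density_def measure_supball V_def)
    then show ?thesis
      using V nonneg by (simp add: emeasure_supball_inter[OF A] flip: ennreal_mult)
  qed
  have "(\<integral>\<^sup>+y\<in>supball x r. local_density A s y \<partial>lborel) = ennreal I"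
    unfolding I_def using integrable nonneg by (intro nn_integral_has_integral_lebesgue') auto
  then have "ennreal (V * I) = ennreal V * (\<integral>\<^sup>+y\<in>supball x r. local_density A s y \<partial>lborel)"
    using V I by (simp add: ennreal_mult)
  also have "\<dots> = (\<integral>\<^sup>+y\<in>supball x r. ennreal V * ennreal (local_density A s y) \<partial>lborel)"
    by (simp add: nn_integral_cmult mult.assoc)
  also have "\<dots> = (\<integral>\<^sup>+y\<in>supball x r. emeasure lborel (supball y s \<inter> A) \<partial>lborel)"
    by (simp add: pointwise)
  also have "\<dots> = (\<integral>\<^sup>+z\<in>A. emeasure lborel (supball x r \<inter> supball z s) \<partial>lborel)"
    using A by (rule nn_integral_measure_supball_inter_swap)
  finally show ?thesis
    by (simp add: V_def I_def)
qed

lemma integral_local_density_bounds: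
  fixes x :: "real ^ 'n"
  assumes A: "A \<in> sets borel" and s: "0 < s"
  shows "measure lborel (supball x (r - s) \<inter> A) \<le> integral (supball x r) (local_density A s)"
    and "integral (supball x r) (local_density A s) \<le> measure lborel (supball x (r + s) \<inter> A)"
proof -
  define V where "V = (2 * s) ^ CARD('n)"
  define I where "I = integral (supball x r) (local_density A s)"
  have V: "0 < V"
    using s by (simp add: V_def)
  have "0 \<le> I"
    unfolding I_def using integrable_local_density[OF s A]
    by (rule integral_nonneg) (simp add: local_density_def)
  have "ennreal (V * measure lborel (supball x (r - s) \<inter> A)) \<le> ennreal (V * I)"
    unfolding V_def I_def integral_local_density_eq[OF A s]
    by (rule nn_integral_measure_supball_inter_ge[OF A less_imp_le[OF s]])
  moreover have "ennreal (V * I) \<le> ennreal (V * measure lborel (supball x (r + s) \<inter> A))"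
    unfolding V_def I_def integral_local_density_eq[OF A s]
    by (rule nn_integral_measure_supball_inter_le[OF A less_imp_le[OF s]])
  ultimately show "measure lborel (supball x (r - s) \<inter> A) \<le> I"
    and "I \<le> measure lborel (supball x (r + s) \<inter> A)"
    using V \<open>0 \<le> I\<close> by simp_all
qed

lemma one_sub_power_one_sub_le: "(t :: real) \<le> 1 \<Longrightarrow> 1 - (1 - t) ^ n \<le> real n * t"
  using Bernoulli_inequality[of "- t" n] by simp

lemma one_add_power_sub_one_le:
  fixes t :: real
  assumes "0 \<le> t" and "t \<le> 1"
  shows "(1 + t) ^ n - 1 \<le> real n * 2 ^ (n - 1) * t"
proof -
  have "(1 + t) ^ i \<le> 2 ^ (n - 1)" if "i < n" for i
  proof -
    have "(1 + t) ^ i \<le> 2 ^ i" using assms by (intro power_mono) auto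
    also have "\<dots> \<le> 2 ^ (n - 1)" using that by (intro power_increasing) auto
    finally show ?thesis .
  qed
  then have "(\<Sum>i<n. (1 + t) ^ i) \<le> real n * 2 ^ (n - 1)"
    using sum_bounded_above[of "{..<n}" "\<lambda>i. (1 + t) ^ i" "2 ^ (n - 1)"] by simp
  then show ?thesis
    using assms(1) by (simp add: power_diff_1_eq mult_right_mono mult.commute[of t])
qed

lemma measure_supball_inter_diff_le:
  fixes x :: "real ^ 'n"
  assumes "A \<in> sets borel" and "r1 \<le> r2"
  shows "measure lborel (supball x r2 \<inter> A) - measure lborel (supball x r1 \<inter> A)
       \<le> measure lborel (supball x r2) - measure lborel (supball x r1)"
proof -
  have "measure lborel (supball x r2 - supball x r1) = measure lborel (supball x r2) - measure lborel (supball x r1)"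
    by (rule measurable_measure_Diff) (simp_all add: supball_mono assms(2))
  then show ?thesis
    using measure_inter_diff_le_measure_diff[of "supball x r2" lborel "supball x r1" A] assms(1)
    by simp
qed

lemma measure_supball_shells_le:
  fixes x :: "real ^ 'n"
  assumes s: "0 \<le> s" "s \<le> r" and r: "0 < r"
  shows "measure lborel (supball x r) - measure lborel (supball x (r - s))
       \<le> real CARD('n) * 2 ^ (CARD('n) - 1) * (s / r) * measure lborel (supball x r)"
    and "measure lborel (supball x (r + s)) - measure lborel (supball x r)
       \<le> real CARD('n) * 2 ^ (CARD('n) - 1) * (s / r) * measure lborel (supball x r)"
proof -
  define d where "d = CARD('n)"
  define t where "t = s / r"
  define V where "V = (2 * r) ^ d"
  have t: "0 \<le> t" "t \<le> 1"
    using s r by (auto simp: t_def)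
  have V: "0 \<le> V" and volume: "measure lborel (supball x r) = V"
    using r by (simp_all add: V_def d_def measure_supball)
  have "2 * (r - s) = 2 * r * (1 - t)" "2 * (r + s) = 2 * r * (1 + t)"
    using r by (simp_all add: t_def field_simps)
  then have volume_minus: "measure lborel (supball x (r - s)) = V * (1 - t) ^ d"
    and volume_plus: "measure lborel (supball x (r + s)) = V * (1 + t) ^ d"
    using s by (simp_all add: measure_supball V_def d_def power_mult_distrib)
  have "1 - (1 - t) ^ d \<le> real d * t"
    by (rule one_sub_power_one_sub_le[OF t(2)])
  also have "\<dots> \<le> real d * 2 ^ (d - 1) * t"
    using t(1) by (intro mult_right_mono) (auto simp: mult_le_cancel_left1)
  finally have "V * (1 - (1 - t) ^ d) \<le> V * (real d * 2 ^ (d - 1) * t)"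
    using V by (rule mult_left_mono)
  then show "measure lborel (supball x r) - measure lborel (supball x (r - s))
      \<le> real CARD('n) * 2 ^ (CARD('n) - 1) * (s / r) * measure lborel (supball x r)"
    by (simp add: volume volume_minus d_def t_def algebra_simps)
  have "V * ((1 + t) ^ d - 1) \<le> V * (real d * 2 ^ (d - 1) * t)"
    using one_add_power_sub_one_le[OF t] V by (rule mult_left_mono)
  then show "measure lborel (supball x (r + s)) - measure lborel (supball x r)
      \<le> real CARD('n) * 2 ^ (CARD('n) - 1) * (s / r) * measure lborel (supball x r)"
    by (simp add: volume volume_plus d_def t_def algebra_simps)
qed

lemma local_density_average_le:
  fixes x :: "real ^ 'n"
  assumes A: "A \<in> sets borel" and s: "0 < s" "s \<le> r"
  shows "\<bar>local_density A r x - integral (supball x r) (local_density A s) / measure lborel (supball x r)\<bar>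
       \<le> real CARD('n) * 2 ^ (CARD('n) - 1) * (s / r)"
proof -
  define C where "C = real CARD('n) * 2 ^ (CARD('n) - 1) * (s / r)"
  define V where "V = measure lborel (supball x r)"
  define m where "m = measure lborel (supball x r \<inter> A)"
  define R where "R = integral (supball x r) (local_density A s)"
  have r: "0 < r"
    using s by simp
  have V: "0 < V"
    using r by (simp add: V_def measure_supball)
  have "m - R \<le> m - measure lborel (supball x (r - s) \<inter> A)"
    using integral_local_density_bounds(1)[OF A s(1), of x r] by (simp add: R_def)
  also have "\<dots> \<le> V - measure lborel (supball x (r - s))"
    using measure_supball_inter_diff_le[OF A, of "r - s" r x] s by (simp add: m_def V_def)
  also have "\<dots> \<le> C * V"
    using measure_supball_shells_le(1)[of s r x] s r by (simp add: C_def V_def)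
  finally have lower: "m - R \<le> C * V" .
  have "R - m \<le> measure lborel (supball x (r + s) \<inter> A) - m"
    using integral_local_density_bounds(2)[OF A s(1), of x r] by (simp add: R_def)
  also have "\<dots> \<le> measure lborel (supball x (r + s)) - V"
    using measure_supball_inter_diff_le[OF A, of r "r + s" x] s by (simp add: m_def V_def)
  also have "\<dots> \<le> C * V"
    using measure_supball_shells_le(2)[of s r x] s r by (simp add: C_def V_def)
  finally have upper: "R - m \<le> C * V" .
  have "\<bar>m / V - R / V\<bar> \<le> C"
    using lower upper V by (simp add: abs_le_iff field_simps)
  then show ?thesis
    by (simp add: local_density_def C_def V_def m_def R_def)
qed

theorem lemma1p1:
  fixes U0 :: "(real ^ 'n) set"
  assumes "CARD('n) \<ge> 2"
    and "U0 \<in> sets borel" and "U0 \<noteq> {}" and "bounded U0"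
  shows "(\<forall>x y :: real ^ 'n. \<forall>l :: int.
            \<bar>sigma_hat U0 l (x + y) - sigma_hat U0 l x\<bar> \<le> 2 powr (real_of_int l) * l1norm y
          \<and> \<bar>sigma_tilde U0 l (x + y) - sigma_tilde U0 l x\<bar> \<le> 2 powr (real_of_int l - 2) * l1norm y)
       \<and> (\<forall>l l' :: int. \<forall>x :: real ^ 'n. l' > l \<longrightarrow>
            \<bar>sigma_hat U0 l x
              - (1 / measure lebesgue (supball x (2 powr (- real_of_int l))))
                * integral (supball x (2 powr (- real_of_int l))) (sigma_hat U0 l')\<bar>
            \<le> real CARD('n) * 2 ^ (CARD('n) - 1) * 2 powr (real_of_int (l - l')))"
proof -
  have A: "UNIV - U0 \<in> sets borel"
    using assms(2) by auto
  have hat: "sigma_hat U0 l = local_density (UNIV - U0) (1 * 2 powr - real_of_int l)" for l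
    by (simp add: fun_eq_iff sigma_hat_def density_U1_eq_local_density[OF assms(2)])
  have tilde: "sigma_tilde U0 l = local_density (UNIV - U0) (4 * 2 powr - real_of_int l)" for l
    by (simp add: fun_eq_iff sigma_tilde_def density_U1_eq_local_density[OF assms(2)])
  have dyadic: "\<bar>local_density (UNIV - U0) (c * 2 powr - real_of_int l) (x + y)
      - local_density (UNIV - U0) (c * 2 powr - real_of_int l) x\<bar> \<le> 2 powr real_of_int l / (2 * c) * l1norm y"
    if "0 < c" for c x y l
    using local_density_translate_le[OF _ A, of "c * 2 powr - real_of_int l" x y] that
    by (simp add: powr_minus field_simps)
  have "2 powr real_of_int l / 2 \<le> 2 powr real_of_int l"
    and "2 powr real_of_int l / 8 \<le> 2 powr (real_of_int l - 2)" for l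
    by (simp_all add: powr_diff)
  then have lipschitz: "\<bar>sigma_hat U0 l (x + y) - sigma_hat U0 l x\<bar> \<le> 2 powr real_of_int l * l1norm y
      \<and> \<bar>sigma_tilde U0 l (x + y) - sigma_tilde U0 l x\<bar> \<le> 2 powr (real_of_int l - 2) * l1norm y" for x y l
    using dyadic[of 1 l x y] dyadic[of 4 l x y] l1norm_nonneg[of y] unfolding hat tilde
    by (smt (verit) mult_right_mono)
  have "2 powr - real_of_int l' / 2 powr - real_of_int l = 2 powr real_of_int (l - l')" for l l'
    by (simp add: powr_diff [symmetric])
  then have average: "\<bar>sigma_hat U0 l x - 1 / measure lebesgue (supball x (2 powr - real_of_int l))
      * integral (supball x (2 powr - real_of_int l)) (sigma_hat U0 l')\<bar>
      \<le> real CARD('n) * 2 ^ (CARD('n) - 1) * 2 powr real_of_int (l - l')" if "l < l'" for l l' x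
    using local_density_average_le[OF A, of "2 powr - real_of_int l'" "2 powr - real_of_int l" x] that
    by (simp add: hat measure_lebesgue_supball)
  show ?thesis
    using lipschitz average by auto
qed

end
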